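(* For every integer $l\ge -1$ and every integer $n\ge1$, the subset $S'_{l,l+n}=\mu(S_l\cap S_{l+n})\subset M$ is an invariant submanifold of the KP equations $\partial_{t_j}h=\partial_xH^{(j)}$, $j\ge1$ (i.e. all KP flows are tangent to it).
   Context: Let $x$ be a space variable; all coefficients below are functions of $x$, and a subscript $x$ denotes $\partial_x$. Let $M$ be the affine space of formal Laurent series $h(z)=z+\sum_{j\ge1}h_j z^{-j}$, $A$ the affine space of formal Laurent series $a(z)=z+\sum_{j\ge0}a_j z^{-j}$, and $N=M\times A$. The Faà di Bruno iterates of $h$ are $h^{(0)}=1$, $h^{(j+1)}=(\partial_x+h)h^{(j)}=\partial_x h^{(j)}+h\,h^{(j)}$ for $j\ge0$. For $j\ge0$, the KP current $H^{(j)}$ is the unique Laurent series of the form $H^{(j)}=h^{(j)}+\sum_{l=0}^{j-2}p^j_l[h]\,h^{(l)}$, with the $p^j_l[h]$ differential polynomials in the $h_i$ (independent of $z$), such that $H^{(j)}=z^j+O(z^{-1})$ as $z\to\infty$. The KP equations are $\partial_{t_j}h=\partial_x H^{(j)}$. The maps $\mu,\sigma:N\to M$ are $\mu(h,a)=h$ and $\sigma(h,a)=h+a_x/a$. The DKP equations on $N$ are $\partial_{t_j}h=\partial_xH^{(j)}$, $\partial_{t_j}a=a(\tilde H^{(j)}-H^{(j)})$, where $\tilde H^{(j)}$ is $H^{(j)}$ evaluated at $\sigma(h,a)$. For an integer $l\ge-1$, $S_l\subset N$ is the set of pairs $(h,a)$ satisfying $z^l a=H^{(l+1)}+\sum_{m=0}^{l}a_mH^{(l-m)}$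 (for $l=-1$ the sum is empty, so $S_{-1}=\{a=z\}$). It is known that every DKP vector field is tangent to every $S_l$. *)

theory Defs
  imports "HOL-Computational_Algebra.Formal_Laurent_Series"
begin

text \<open>
Coefficients ("functions of x") live in an abstract commutative differential ring
(type 'a with a derivation D playing the role of the x-derivative).
A formal Laurent series in z with finitely many positive powers of z is represented
as a formal Laurent series (library type fls) in the variable w = 1/z:
the coefficient of z^k of f is  f $$ (-k).
\<close>

definition zpow :: "int \<Rightarrow> 'a::comm_ring_1 fls" where
  "zpow k = fls_X_intpow (- k)"

definition zcoeff :: "'a::comm_ring_1 fls \<Rightarrow> int \<Rightarrow> 'a" where
  "zcoeff f k = fls_nth f (- k)"

definition derivation :: "('a::comm_ring_1 \<Rightarrow> 'a) \<Rightarrow> bool" where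
  "derivation D \<longleftrightarrow> (\<forall>x y. D (x + y) = D x + D y) \<and> (\<forall>x y. D (x * y) = x * D y + D x * y)"

definition fls_cmap :: "('a::zero \<Rightarrow> 'b::zero) \<Rightarrow> 'a fls \<Rightarrow> 'b fls" where
  "fls_cmap F f = Abs_fls (\<lambda>n. F (fls_nth f n))"

definition dx :: "('a::comm_ring_1 \<Rightarrow> 'a) \<Rightarrow> 'a fls \<Rightarrow> 'a fls" where
  "dx D f = fls_cmap D f"

definition Mset :: "'a::comm_ring_1 fls set" where
  "Mset = {h. zcoeff h 1 = 1 \<and> (\<forall>k. (k > 1 \<or> k = 0) \<longrightarrow> zcoeff h k = 0)}"

definition Aset :: "'a::comm_ring_1 fls set" where
  "Aset = {a. zcoeff a 1 = 1 \<and> (\<forall>k > 1. zcoeff a k = 0)}"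

fun fdb :: "('a::comm_ring_1 \<Rightarrow> 'a) \<Rightarrow> 'a fls \<Rightarrow> nat \<Rightarrow> 'a fls" where
  "fdb D h 0 = 1"
| "fdb D h (Suc j) = dx D (fdb D h j) + h * fdb D h j"

definition KPcurrent :: "('a::comm_ring_1 \<Rightarrow> 'a) \<Rightarrow> 'a fls \<Rightarrow> nat \<Rightarrow> 'a fls" where
  "KPcurrent D h j = (THE H. (\<exists>p :: nat \<Rightarrow> 'a.
       H = fdb D h j + (\<Sum>l<j - 1. fls_const (p l) * fdb D h l)) \<and>
       (\<forall>k \<ge> 0. zcoeff H k = (if k = int j then 1 else 0)))"

definition KPfield :: "('a::comm_ring_1 \<Rightarrow> 'a) \<Rightarrow> nat \<Rightarrow> 'a fls \<Rightarrow> 'a fls" where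
  "KPfield D j h = dx D (KPcurrent D h j)"

text \<open>The maps mu and sigma : N -> M, sigma(h,a) = h + a_x / a
  (a_x / a is the unique q with q * a = a_x; a is invertible since its leading coefficient is 1).\<close>
definition mu :: "'a fls \<times> 'a fls \<Rightarrow> 'a fls" where
  "mu p = fst p"

definition sigma :: "('a::comm_ring_1 \<Rightarrow> 'a) \<Rightarrow> 'a fls \<times> 'a fls \<Rightarrow> 'a fls" where
  "sigma D p = fst p + (THE q. q * snd p = dx D (snd p))"

definition Sset :: "('a::comm_ring_1 \<Rightarrow> 'a) \<Rightarrow> int \<Rightarrow> ('a fls \<times> 'a fls) set" where
  "Sset D l = {(h, a). h \<in> Mset \<and> a \<in> Aset \<and>
      zpow l * a = KPcurrent D h (nat (l + 1))
        + (\<Sum>m \<in> {m::nat. int m \<le> l}. fls_const (zcoeff a (- int m)) * KPcurrent D h (nat (l - int m)))}"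

definition Sprime :: "('a::comm_ring_1 \<Rightarrow> 'a) \<Rightarrow> int \<Rightarrow> int \<Rightarrow> 'a fls set" where
  "Sprime D l l' = mu ` (Sset D l \<inter> Sset D l')"

datatype 'a dual = Dual (re: 'a) (ep: 'a)

instantiation dual :: (comm_ring_1) comm_ring_1
begin
definition "0 = Dual 0 0"
definition "1 = Dual 1 0"
definition "x + y = Dual (re x + re y) (ep x + ep y)"
definition "x - y = Dual (re x - re y) (ep x - ep y)"
definition "- x = Dual (- re x) (- ep x)"
definition "x * y = Dual (re x * re y) (re x * ep y + ep x * re y)"
instance
  by standard (auto simp: zero_dual_def one_dual_def plus_dual_def minus_dual_def
      uminus_dual_def times_dual_def algebra_simps intro: dual.expand)
end

definition dualD :: "('a \<Rightarrow> 'a) \<Rightarrow> 'a dual \<Rightarrow> 'a dual" where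
  "dualD D x = Dual (D (re x)) (D (ep x))"

text \<open>A vector field V on M (over the differential ring ('a, D)) is tangent to the subset
  described functorially by S (S D gives the subset over the differential ring with derivation D)
  if for every point p of S over 'a, the first-order displacement p + eps V(p) lies in S over
  the dual numbers 'a[eps] (eps^2 = 0).\<close>
definition tangent ::
  "('a::comm_ring_1 \<Rightarrow> 'a) \<Rightarrow> ('a fls \<Rightarrow> 'a fls) \<Rightarrow> 'a fls set \<Rightarrow> 'a dual fls set \<Rightarrow> bool" where
  "tangent D V S Seps \<longleftrightarrow>
     (\<forall>p \<in> S. fls_cmap (\<lambda>c. Dual c 0) p + fls_cmap (\<lambda>c. Dual 0 c) (V p) \<in> Seps)"

end

theory Submission
  imports Defs
begin

unbundle fps_syntax

text \<open>
Write T_h = d_x + h (\<open>fdb_op\<close>), so that h^(k) = T_h^k 1, and let W(h, g)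
(\<open>fdb_span\<close>) be the set of finite combinations of the T_h^k g with z-independent
coefficients. As T_h^k g is monic of degree k + deg g in z, triangular elimination shows that the
KP currents exist and lie in W(h, 1), and that an element of W(h, 1) without non-negative powers of z
vanishes. Hence, for h in M, a in A and l >= -1, the pair (h, a) lies in S_l iff z^l a lies in W(h, 1).

Tangency is tested over the dual numbers (eps^2 = 0). For h' = h + eps H_x with H = H^(j), the gauge
identity T_h' ((1 - eps H) f) = (1 - eps H) T_h f gives (1 - eps H) W(h, 1) \<subseteq> W(h', 1).
Choose v in W(h, a) agreeing with a H in all positive powers of z; then a' = a + eps (v - a H) lies
in A, and z^L a' = (1 - eps H) (z^L a + eps z^L v) lies in W(h', 1) whenever z^L a lies in W(h, 1),
because z^L v lies in W(h, z^L a). So the single pair (h', a') lies in both S_l and S_(l+n).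
\<close>

section \<open>Derivations of Laurent series\<close>

lemma derivation_add: "derivation D \<Longrightarrow> D (x + y) = D x + D y"
  by (simp add: derivation_def)

lemma derivation_mult: "derivation D \<Longrightarrow> D (x * y) = x * D y + D x * y"
  by (simp add: derivation_def)

lemma derivation_zero: "derivation D \<Longrightarrow> D 0 = 0"
  using derivation_add[of D 0 0] by simp

lemma derivation_one: "derivation D \<Longrightarrow> D 1 = 0"
  using derivation_mult[of D 1 1] by simp

lemma derivation_diff: "derivation D \<Longrightarrow> D (x - y) = D x - D y"
  using derivation_add[of D "x - y" y] by (simp add: eq_diff_eq)

lemma derivation_sum: "derivation D \<Longrightarrow> D (sum f A) = (\<Sum>x\<in>A. D (f x))"
  by (induction A rule: infinite_finite_induct) (auto simp: derivation_zero derivation_add)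

lemma fls_nth_cmap: "F 0 = 0 \<Longrightarrow> fls_cmap F f $$ n = F (f $$ n)"
  unfolding fls_cmap_def
  by (rule nth_Abs_fls) (rule MOST_mono[OF MOST_fls_neg_nth_eq_0[of f]], simp)

lemma fls_nth_dx: "derivation D \<Longrightarrow> dx D f $$ n = D (f $$ n)"
  by (simp add: dx_def fls_nth_cmap derivation_zero)

lemma fls_times_nth_lower_bounds:
  fixes f g :: "'a::comm_ring_1 fls"
  assumes "\<forall>i<a. f $$ i = 0" and "\<forall>i<b. g $$ i = 0"
  shows "(f * g) $$ n = (\<Sum>i=a..n - b. f $$ i * g $$ (n - i))"
proof (cases "f = 0 \<or> g = 0")
  case False
  then have "a \<le> fls_subdegree f" "b \<le> fls_subdegree g"
    using assms by (metis linorder_not_le nth_fls_subdegree_nonzero)+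
  then have "(\<Sum>i=fls_subdegree f..n - fls_subdegree g. f $$ i * g $$ (n - i))
      = (\<Sum>i=a..n - b. f $$ i * g $$ (n - i))"
    by (intro sum.mono_neutral_left) (auto simp: fls_eq0_below_subdegree)
  then show ?thesis
    by (simp add: fls_times_nth(2))
qed auto

lemma dx_diff: "derivation D \<Longrightarrow> dx D (f - g) = dx D f - dx D g"
  by (rule fls_eqI) (simp add: fls_nth_dx derivation_diff)

lemma dx_one: "derivation D \<Longrightarrow> dx D 1 = 0"
  by (rule fls_eqI) (simp add: fls_nth_dx derivation_zero derivation_one)

lemma dx_const: "derivation D \<Longrightarrow> dx D (fls_const c) = fls_const (D c)"
  by (rule fls_eqI) (simp add: fls_nth_dx derivation_zero)

lemma dx_zpow: "derivation D \<Longrightarrow> dx D (zpow k) = 0"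
  by (rule fls_eqI) (simp add: fls_nth_dx zpow_def derivation_zero derivation_one)

lemma dx_sum: "derivation D \<Longrightarrow> dx D (sum f A) = (\<Sum>x\<in>A. dx D (f x))"
  by (rule fls_eqI) (simp add: fls_nth_dx derivation_sum fls_nth_sum)

lemma dx_mult:
  assumes D: "derivation D"
  shows "dx D (f * g) = dx D f * g + f * dx D g"
proof (rule fls_eqI)
  fix n
  define a where "a = fls_subdegree f"
  define b where "b = fls_subdegree g"
  have f: "\<forall>i<a. f $$ i = 0" and g: "\<forall>i<b. g $$ i = 0"
    by (auto simp: a_def b_def fls_eq0_below_subdegree)
  then have df: "\<forall>i<a. dx D f $$ i = 0" and dg: "\<forall>i<b. dx D g $$ i = 0"
    by (auto simp: fls_nth_dx D derivation_zero)
  have "dx D (f * g) $$ n = (\<Sum>i=a..n - b. dx D f $$ i * g $$ (n - i))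
      + (\<Sum>i=a..n - b. f $$ i * dx D g $$ (n - i))"
    by (simp add: fls_nth_dx D fls_times_nth_lower_bounds[OF f g] derivation_sum
        derivation_mult sum.distrib algebra_simps)
  then show "dx D (f * g) $$ n = (dx D f * g + f * dx D g) $$ n"
    by (simp add: fls_times_nth_lower_bounds[OF df g] fls_times_nth_lower_bounds[OF f dg])
qed

locale coeff_ring_hom =
  fixes E :: "'a::comm_ring_1 \<Rightarrow> 'b::comm_ring_1"
  assumes hom_add: "E (x + y) = E x + E y"
    and hom_mult: "E (x * y) = E x * E y"
    and hom_one: "E 1 = 1"
begin

lemma hom_zero: "E 0 = 0"
  using hom_add[of 0 0] by simp

lemma hom_diff: "E (x - y) = E x - E y"
  using hom_add[of "x - y" y] by (simp add: eq_diff_eq)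

lemma hom_sum: "E (sum f A) = (\<Sum>x\<in>A. E (f x))"
  by (induction A rule: infinite_finite_induct) (auto simp: hom_zero hom_add)

lemma fls_nth_cmap_hom [simp]: "fls_cmap E f $$ n = E (f $$ n)"
  by (simp add: fls_nth_cmap hom_zero)

lemma cmap_add: "fls_cmap E (f + g) = fls_cmap E f + fls_cmap E g"
  by (rule fls_eqI) (simp add: hom_add)

lemma cmap_diff: "fls_cmap E (f - g) = fls_cmap E f - fls_cmap E g"
  by (rule fls_eqI) (simp add: hom_diff)

lemma cmap_one: "fls_cmap E 1 = 1"
  by (rule fls_eqI) (simp add: hom_zero hom_one)

lemma cmap_const: "fls_cmap E (fls_const c) = fls_const (E c)"
  by (rule fls_eqI) (simp add: hom_zero)

lemma cmap_zpow: "fls_cmap E (zpow k) = zpow k"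
  by (rule fls_eqI) (simp add: zpow_def hom_zero hom_one)

lemma cmap_sum: "fls_cmap E (sum f A) = (\<Sum>x\<in>A. fls_cmap E (f x))"
  by (rule fls_eqI) (simp add: fls_nth_sum hom_sum)

lemma cmap_mult: "fls_cmap E (f * g) = fls_cmap E f * fls_cmap E g"
proof (rule fls_eqI)
  fix n
  define a where "a = fls_subdegree f"
  define b where "b = fls_subdegree g"
  have f: "\<forall>i<a. f $$ i = 0" and g: "\<forall>i<b. g $$ i = 0"
    by (auto simp: a_def b_def fls_eq0_below_subdegree)
  then have Ef: "\<forall>i<a. fls_cmap E f $$ i = 0" and Eg: "\<forall>i<b. fls_cmap E g $$ i = 0"
    by (auto simp: hom_zero)
  show "fls_cmap E (f * g) $$ n = (fls_cmap E f * fls_cmap E g) $$ n"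
    by (simp add: fls_times_nth_lower_bounds[OF f g] fls_times_nth_lower_bounds[OF Ef Eg]
        hom_sum hom_mult)
qed

lemma cmap_dx:
  assumes "derivation D" and "derivation D'" and "\<And>c. D' (E c) = E (D c)"
  shows "dx D' (fls_cmap E f) = fls_cmap E (dx D f)"
  by (rule fls_eqI) (simp add: fls_nth_dx assms)

end

section \<open>Degrees and leading coefficients in z\<close>

definition zdegree_le :: "'a::comm_ring_1 fls \<Rightarrow> int \<Rightarrow> bool" where
  "zdegree_le f d \<longleftrightarrow> (\<forall>k>d. zcoeff f k = 0)"

definition zmonic :: "'a::comm_ring_1 fls \<Rightarrow> int \<Rightarrow> bool" where
  "zmonic f d \<longleftrightarrow> zdegree_le f d \<and> zcoeff f d = 1"

lemma zcoeff_add [simp]: "zcoeff (f + g) k = zcoeff f k + zcoeff g k"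
  by (simp add: zcoeff_def)

lemma zcoeff_diff [simp]: "zcoeff (f - g) k = zcoeff f k - zcoeff g k"
  by (simp add: zcoeff_def)

lemma zcoeff_const_mult [simp]: "zcoeff (fls_const c * f) k = c * zcoeff f k"
  by (simp add: zcoeff_def)

lemma zcoeff_sum [simp]: "zcoeff (sum f A) k = (\<Sum>x\<in>A. zcoeff (f x) k)"
  by (simp add: zcoeff_def fls_nth_sum)

lemma zcoeff_one [simp]: "zcoeff 1 k = (if k = 0 then 1 else 0)"
  by (simp add: zcoeff_def)

lemma zcoeff_dx: "derivation D \<Longrightarrow> zcoeff (dx D f) k = D (zcoeff f k)"
  by (simp add: zcoeff_def fls_nth_dx)

lemma zcoeff_zpow_mult: "zcoeff (zpow l * f) k = zcoeff f (k - l)"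
proof -
  have "fls_shift l 1 * f = fls_shift l f"
    using fls_X_intpow_times_conv_shift(1)[of "- l" f] by simp
  then show ?thesis
    by (simp add: zpow_def zcoeff_def)
qed

lemma zcoeff_mult:
  assumes "zdegree_le f a" and "zdegree_le g b"
  shows "zcoeff (f * g) k = (\<Sum>i = - a..b - k. f $$ i * g $$ (- k - i))"
proof -
  have "\<forall>i < - a. f $$ i = 0" "\<forall>i < - b. g $$ i = 0"
    using assms unfolding zdegree_le_def zcoeff_def by (metis minus_less_iff minus_minus)+
  from fls_times_nth_lower_bounds[OF this] show ?thesis
    by (simp add: zcoeff_def algebra_simps)
qed

lemma zdegree_le_mult: "zdegree_le f a \<Longrightarrow> zdegree_le g b \<Longrightarrow> zdegree_le (f * g) (a + b)"
  unfolding zdegree_le_def by (simp add: zcoeff_mult[unfolded zdegree_le_def])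

lemma zcoeff_mult_top:
  assumes "zdegree_le f a" and "zdegree_le g b"
  shows "zcoeff (f * g) (a + b) = zcoeff f a * zcoeff g b"
  using zcoeff_mult[OF assms, of "a + b"] by (simp add: zcoeff_def)

lemma zcoeff_mult_subtop:
  assumes "zdegree_le f a" and "zdegree_le g b"
  shows "zcoeff (f * g) (a + b - 1) = zcoeff f a * zcoeff g (b - 1) + zcoeff f (a - 1) * zcoeff g b"
proof -
  have "{- a..b - (a + b - 1)} = {- a, - a + 1}"
    by auto
  then show ?thesis
    using zcoeff_mult[OF assms, of "a + b - 1"] by (simp add: zcoeff_def algebra_simps)
qed

lemma zdegree_le_mono: "zdegree_le f d \<Longrightarrow> d \<le> e \<Longrightarrow> zdegree_le f e"
  by (simp add: zdegree_le_def)

lemma zdegree_le_dx: "derivation D \<Longrightarrow> zdegree_le f d \<Longrightarrow> zdegree_le (dx D f) d"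
  by (simp add: zdegree_le_def zcoeff_dx derivation_zero)

lemma in_Mset_iff: "h \<in> Mset \<longleftrightarrow> zmonic h 1 \<and> zcoeff h 0 = 0"
  unfolding Mset_def zmonic_def zdegree_le_def by auto

lemma in_Aset_iff: "a \<in> Aset \<longleftrightarrow> zmonic a 1"
  unfolding Aset_def zmonic_def zdegree_le_def by auto

section \<open>The operator d_x + h and the KP currents\<close>

definition fdb_op :: "('a::comm_ring_1 \<Rightarrow> 'a) \<Rightarrow> 'a fls \<Rightarrow> 'a fls \<Rightarrow> 'a fls" where
  "fdb_op D h f = dx D f + h * f"

lemma fdb_eq_fdb_op_power: "fdb D h k = (fdb_op D h ^^ k) 1"
  by (induction k) (simp_all add: fdb_op_def)

lemma zmonic_fdb_op:
  assumes D: "derivation D" and h: "h \<in> Mset" and f: "zmonic f d"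
  shows "zmonic (fdb_op D h f) (d + 1)"
proof -
  have "zmonic h 1"
    using h by (simp add: in_Mset_iff)
  then have "zdegree_le (h * f) (d + 1)" "zcoeff (h * f) (d + 1) = 1"
    using zdegree_le_mult[of h 1 f d] zcoeff_mult_top[of h 1 f d] f
    by (simp_all add: zmonic_def add.commute)
  moreover have "zdegree_le (dx D f) d"
    using f by (simp add: zmonic_def zdegree_le_dx[OF D])
  ultimately show ?thesis
    unfolding fdb_op_def zmonic_def zdegree_le_def by simp
qed

lemma zmonic_fdb_op_power:
  assumes "derivation D" and "h \<in> Mset" and "zmonic f d"
  shows "zmonic ((fdb_op D h ^^ k) f) (d + int k)"
proof (induction k)
  case (Suc k)
  then show ?case
    using zmonic_fdb_op[OF assms(1,2) Suc] by (simp add: algebra_simps)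
qed (simp add: assms)

lemma zmonic_fdb: "derivation D \<Longrightarrow> h \<in> Mset \<Longrightarrow> zmonic (fdb D h k) (int k)"
  using zmonic_fdb_op_power[of D h 1 0 k]
  by (simp add: fdb_eq_fdb_op_power zmonic_def zdegree_le_def)

text \<open>The subleading coefficient vanishes because h has no z^0 term.\<close>

lemma zcoeff_fdb_subtop:
  assumes D: "derivation D" and h: "h \<in> Mset"
  shows "zcoeff (fdb D h k) (int k - 1) = 0"
proof (induction k)
  case (Suc k)
  have "zcoeff (h * fdb D h k) (1 + int k - 1) = 0"
    using zcoeff_mult_subtop[of h 1 "fdb D h k" "int k"] zmonic_fdb[OF D h, of k] h Suc
    by (simp add: zmonic_def in_Mset_iff)
  moreover have "zcoeff (dx D (fdb D h k)) (int k) = 0"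
    using zmonic_fdb[OF D h, of k] by (simp add: zmonic_def zcoeff_dx D derivation_one)
  ultimately show ?case
    by simp
qed simp

lemma zcoeff_fdb_top:
  assumes "derivation D" and "h \<in> Mset" and "k \<ge> int j - 1"
  shows "zcoeff (fdb D h j) k = (if k = int j then 1 else 0)"
  using zmonic_fdb[OF assms(1,2), of j] zcoeff_fdb_subtop[OF assms(1,2), of j] assms(3)
  by (cases "k = int j - 1") (auto simp: zmonic_def zdegree_le_def)

lemma triangular_lincomb_eq_0:
  assumes b: "\<And>k. zmonic (b k) (int k + s)"
    and "\<And>m. m \<ge> s \<Longrightarrow> zcoeff (\<Sum>k<N. fls_const (c k) * b k) m = 0"
  shows "(\<Sum>k<N. fls_const (c k) * b k) = 0"
  using assms(2)
proof (induction N)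
  case (Suc N)
  have "zdegree_le (b k) (int N - 1 + s)" if "k < N" for k
    using b[of k] that zdegree_le_mono[of "b k" "int k + s" "int N - 1 + s"]
    by (simp add: zmonic_def)
  then have "zcoeff (\<Sum>k<N. fls_const (c k) * b k) (int N + s) = 0"
    by (simp add: zdegree_le_def)
  then have "c N = 0"
    using Suc.prems[of "int N + s"] b[of N] by (simp add: zmonic_def)
  then show ?case
    using Suc by simp
qed simp

lemma triangular_reduction:
  assumes b: "\<And>k. zmonic (b k) (int k + s)"
  shows "\<exists>c. \<forall>m\<ge>s. zcoeff (t - (\<Sum>k<N. fls_const (c k) * b k)) m
                     = (if m < int N + s then 0 else zcoeff t m)"
proof (induction N arbitrary: t)
  case (Suc N)
  define t' where "t' = t - fls_const (zcoeff t (int N + s)) * b N"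
  obtain c where c: "\<forall>m\<ge>s. zcoeff (t' - (\<Sum>k<N. fls_const (c k) * b k)) m
                     = (if m < int N + s then 0 else zcoeff t' m)"
    using Suc.IH by blast
  define c' where "c' = c(N := zcoeff t (int N + s))"
  have "t - (\<Sum>k<Suc N. fls_const (c' k) * b k) = t' - (\<Sum>k<N. fls_const (c k) * b k)"
    by (simp add: c'_def t'_def)
  moreover have "zcoeff t' m = (if m = int N + s then 0 else zcoeff t m)" if "m \<ge> int N + s" for m
    using b[of N] that by (auto simp: t'_def zmonic_def zdegree_le_def)
  ultimately have "\<forall>m\<ge>s. zcoeff (t - (\<Sum>k<Suc N. fls_const (c' k) * b k)) m
                     = (if m < int (Suc N) + s then 0 else zcoeff t m)"
    using c by auto
  then show ?case
    by blast
qed simp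

definition is_KPcurrent :: "('a::comm_ring_1 \<Rightarrow> 'a) \<Rightarrow> 'a fls \<Rightarrow> nat \<Rightarrow> 'a fls \<Rightarrow> bool" where
  "is_KPcurrent D h j H \<longleftrightarrow>
     (\<exists>p. H = fdb D h j + (\<Sum>l<j - 1. fls_const (p l) * fdb D h l)) \<and>
     (\<forall>k\<ge>0. zcoeff H k = (if k = int j then 1 else 0))"

lemma is_KPcurrent_exists:
  assumes D: "derivation D" and h: "h \<in> Mset"
  shows "\<exists>H. is_KPcurrent D h j H"
proof -
  obtain c where c: "\<forall>m\<ge>0. zcoeff (fdb D h j - (\<Sum>k<j - 1. fls_const (c k) * fdb D h k)) m
                     = (if m < int (j - 1) then 0 else zcoeff (fdb D h j) m)"
    using triangular_reduction[of "fdb D h" 0 "fdb D h j" "j - 1"] zmonic_fdb[OF D h]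
    unfolding add_0_right by blast
  define p where "p k = - c k" for k
  define H where "H = fdb D h j + (\<Sum>l<j - 1. fls_const (p l) * fdb D h l)"
  have H: "H = fdb D h j - (\<Sum>k<j - 1. fls_const (c k) * fdb D h k)"
    by (simp add: H_def p_def sum_negf)
  have j: "int j - 1 \<le> int (j - 1)" "int (j - 1) \<le> int j"
    by (cases j) simp_all
  have "zcoeff H k = (if k = int j then 1 else 0)" if "k \<ge> 0" for k
  proof (cases "k < int (j - 1)")
    case True
    moreover have "k \<noteq> int j"
      using True j by linarith
    ultimately show ?thesis
      using c[rule_format, OF that] unfolding H by simp
  next
    case False
    then have "zcoeff H k = zcoeff (fdb D h j) k"
      using c[rule_format, OF that] unfolding H by simp
    also have "\<dots> = (if k = int j then 1 else 0)"
      using False j by (intro zcoeff_fdb_top[OF D h]) linarith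
    finally show ?thesis .
  qed
  then have "is_KPcurrent D h j H"
    unfolding is_KPcurrent_def using H_def by (intro conjI exI[of _ p]) auto
  then show ?thesis ..
qed

lemma is_KPcurrent_unique:
  assumes D: "derivation D" and h: "h \<in> Mset"
    and "is_KPcurrent D h j H" and "is_KPcurrent D h j H'"
  shows "H = H'"
proof -
  obtain p p' where "H = fdb D h j + (\<Sum>l<j - 1. fls_const (p l) * fdb D h l)"
    and "H' = fdb D h j + (\<Sum>l<j - 1. fls_const (p' l) * fdb D h l)"
    using assms(3,4) unfolding is_KPcurrent_def by blast
  then have diff: "H - H' = (\<Sum>l<j - 1. fls_const (p l - p' l) * fdb D h l)"
    by (simp add: fls_minus_const[symmetric] left_diff_distrib sum_subtractf)
  have "zcoeff (H - H') m = 0" if "m \<ge> 0" for m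
    using assms(3,4) that by (simp add: is_KPcurrent_def)
  then have "H - H' = 0"
    unfolding diff using zmonic_fdb[OF D h] by (intro triangular_lincomb_eq_0) (auto simp: diff)
  then show ?thesis
    by simp
qed

lemma is_KPcurrent_KPcurrent:
  assumes "derivation D" and "h \<in> Mset"
  shows "is_KPcurrent D h j (KPcurrent D h j)"
proof -
  have "KPcurrent D h j = (THE H. is_KPcurrent D h j H)"
    by (simp add: KPcurrent_def is_KPcurrent_def)
  moreover have "\<exists>!H. is_KPcurrent D h j H"
    using is_KPcurrent_exists[OF assms] is_KPcurrent_unique[OF assms] by (rule ex_ex1I)
  ultimately show ?thesis
    by (simp add: theI')
qed

lemma zcoeff_KPcurrent:
  assumes "derivation D" and "h \<in> Mset" and "k \<ge> 0"
  shows "zcoeff (KPcurrent D h j) k = (if k = int j then 1 else 0)"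
  using is_KPcurrent_KPcurrent[OF assms(1,2), of j] assms(3) by (simp add: is_KPcurrent_def)

lemma zdegree_le_KPcurrent: "derivation D \<Longrightarrow> h \<in> Mset \<Longrightarrow> zdegree_le (KPcurrent D h j) (int j)"
  by (simp add: zdegree_le_def zcoeff_KPcurrent)

lemma zdegree_le_dx_KPcurrent:
  "derivation D \<Longrightarrow> h \<in> Mset \<Longrightarrow> zdegree_le (dx D (KPcurrent D h j)) (-1)"
  by (simp add: zdegree_le_def zcoeff_dx zcoeff_KPcurrent derivation_zero derivation_one)

section \<open>The modules W(h, g)\<close>

definition fdb_span :: "('a::comm_ring_1 \<Rightarrow> 'a) \<Rightarrow> 'a fls \<Rightarrow> 'a fls \<Rightarrow> 'a fls set" where
  "fdb_span D h g = {f. \<exists>c N. f = (\<Sum>k<N. fls_const (c k) * (fdb_op D h ^^ k) g)}"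

lemma fdb_spanI: "(\<Sum>k<N. fls_const (c k) * (fdb_op D h ^^ k) g) \<in> fdb_span D h g"
  unfolding fdb_span_def by blast

lemma fdb_spanE:
  assumes "f \<in> fdb_span D h g"
  obtains c N where "f = (\<Sum>k<N. fls_const (c k) * (fdb_op D h ^^ k) g)"
  using assms unfolding fdb_span_def by blast

lemma fdb_span_self: "g \<in> fdb_span D h g"
  using fdb_spanI[where N=1 and c="\<lambda>_. 1"] by simp

lemma fdb_span_zero: "0 \<in> fdb_span D h g"
  using fdb_spanI[where N=0] by simp

lemma fdb_span_add:
  assumes "f \<in> fdb_span D h g" and "f' \<in> fdb_span D h g"
  shows "f + f' \<in> fdb_span D h g"
proof -
  let ?b = "\<lambda>k. (fdb_op D h ^^ k) g"
  obtain c N where f: "f = (\<Sum>k<N. fls_const (c k) * ?b k)"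
    using assms(1) by (elim fdb_spanE)
  obtain c' N' where f': "f' = (\<Sum>k<N'. fls_const (c' k) * ?b k)"
    using assms(2) by (elim fdb_spanE)
  have pad: "(\<Sum>k<n. fls_const (d k) * ?b k)
      = (\<Sum>k<max N N'. fls_const (if k < n then d k else 0) * ?b k)" if "n \<le> max N N'" for n d
    using that by (intro sum.mono_neutral_cong_left) auto
  have "f = (\<Sum>k<max N N'. fls_const (if k < N then c k else 0) * ?b k)"
    unfolding f by (rule pad) simp
  moreover have "f' = (\<Sum>k<max N N'. fls_const (if k < N' then c' k else 0) * ?b k)"
    unfolding f' by (rule pad) simp
  ultimately have "f + f' = (\<Sum>k<max N N'.
      fls_const ((if k < N then c k else 0) + (if k < N' then c' k else 0)) * ?b k)"
    by (simp add: sum.distrib fls_plus_const[symmetric] distrib_right)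
  then show ?thesis
    by (simp add: fdb_spanI)
qed

lemma fdb_span_const_mult:
  assumes "f \<in> fdb_span D h g"
  shows "fls_const a * f \<in> fdb_span D h g"
proof -
  obtain c N where "f = (\<Sum>k<N. fls_const (c k) * (fdb_op D h ^^ k) g)"
    using assms by (elim fdb_spanE)
  then have "fls_const a * f = (\<Sum>k<N. fls_const (a * c k) * (fdb_op D h ^^ k) g)"
    by (simp add: sum_distrib_left mult.assoc[symmetric])
  then show ?thesis
    by (simp add: fdb_spanI)
qed

lemma fdb_span_diff:
  assumes "f \<in> fdb_span D h g" and "f' \<in> fdb_span D h g"
  shows "f - f' \<in> fdb_span D h g"
  using fdb_span_add[OF assms(1) fdb_span_const_mult[OF assms(2), of "-1"]] by simp

lemma fdb_span_sum:
  "(\<And>x. x \<in> A \<Longrightarrow> f x \<in> fdb_span D h g) \<Longrightarrow> sum f A \<in> fdb_span D h g"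
  by (induction A rule: infinite_finite_induct) (simp_all add: fdb_span_zero fdb_span_add)

lemma fdb_op_sum: "derivation D \<Longrightarrow> fdb_op D h (sum f A) = (\<Sum>x\<in>A. fdb_op D h (f x))"
  by (simp add: fdb_op_def dx_sum sum_distrib_left sum.distrib)

lemma fdb_op_const_mult:
  "derivation D \<Longrightarrow> fdb_op D h (fls_const c * f) = fls_const (D c) * f + fls_const c * fdb_op D h f"
  by (simp add: fdb_op_def dx_mult dx_const algebra_simps)

lemma fdb_op_in_fdb_span:
  assumes D: "derivation D" and f: "f \<in> fdb_span D h g"
  shows "fdb_op D h f \<in> fdb_span D h g"
proof -
  let ?b = "\<lambda>k. (fdb_op D h ^^ k) g"
  obtain c N where f: "f = (\<Sum>k<N. fls_const (c k) * ?b k)"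
    using f by (elim fdb_spanE)
  have "(\<Sum>k<N. fls_const (c k) * ?b (Suc k))
      = (\<Sum>k<Suc N. fls_const (case k of 0 \<Rightarrow> 0 | Suc i \<Rightarrow> c i) * ?b k)"
    by (simp only: sum.lessThan_Suc_shift) simp
  then have "(\<Sum>k<N. fls_const (c k) * ?b (Suc k)) \<in> fdb_span D h g"
    by (simp only: fdb_spanI)
  moreover have "fdb_op D h f = (\<Sum>k<N. fls_const (D (c k)) * ?b k) + (\<Sum>k<N. fls_const (c k) * ?b (Suc k))"
    unfolding f by (simp add: fdb_op_sum[OF D] fdb_op_const_mult[OF D] sum.distrib)
  ultimately show ?thesis
    by (simp add: fdb_span_add fdb_spanI)
qed

lemma fdb_op_power_in_fdb_span:
  "derivation D \<Longrightarrow> f \<in> fdb_span D h g \<Longrightarrow> (fdb_op D h ^^ k) f \<in> fdb_span D h g"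
  by (induction k) (simp_all add: fdb_op_in_fdb_span)

lemma fdb_span_trans:
  assumes D: "derivation D" and "g' \<in> fdb_span D h g" and "f \<in> fdb_span D h g'"
  shows "f \<in> fdb_span D h g"
proof -
  obtain c N where "f = (\<Sum>k<N. fls_const (c k) * (fdb_op D h ^^ k) g')"
    using assms(3) by (elim fdb_spanE)
  then show ?thesis
    by (simp add: fdb_span_sum fdb_span_const_mult fdb_op_power_in_fdb_span[OF D assms(2)])
qed

text \<open>Multiplication by a series with vanishing x-derivative, such as a power of z, commutes
  with T_h.\<close>

lemma fdb_span_mult_dx_const:
  assumes D: "derivation D" and Z: "dx D Z = 0" and f: "f \<in> fdb_span D h g"
  shows "Z * f \<in> fdb_span D h (Z * g)"
proof -
  obtain c N where f: "f = (\<Sum>k<N. fls_const (c k) * (fdb_op D h ^^ k) g)"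
    using f by (elim fdb_spanE)
  have "fdb_op D h (Z * f') = Z * fdb_op D h f'" for f'
    by (simp add: fdb_op_def dx_mult[OF D] Z algebra_simps)
  then have "(fdb_op D h ^^ k) (Z * g) = Z * (fdb_op D h ^^ k) g" for k
    by (induction k) simp_all
  then have "Z * f = (\<Sum>k<N. fls_const (c k) * (fdb_op D h ^^ k) (Z * g))"
    by (simp add: f sum_distrib_left algebra_simps)
  then show ?thesis
    by (simp add: fdb_spanI)
qed

lemma (in coeff_ring_hom) cmap_fdb_span:
  assumes "derivation D" and "derivation D'" and "\<And>c. D' (E c) = E (D c)"
    and f: "f \<in> fdb_span D h g"
  shows "fls_cmap E f \<in> fdb_span D' (fls_cmap E h) (fls_cmap E g)"
proof -
  obtain c N where f: "f = (\<Sum>k<N. fls_const (c k) * (fdb_op D h ^^ k) g)"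
    using f by (elim fdb_spanE)
  have "fls_cmap E (fdb_op D h f') = fdb_op D' (fls_cmap E h) (fls_cmap E f')" for f'
    by (simp add: fdb_op_def cmap_add cmap_mult cmap_dx[OF assms(1-3)])
  then have "fls_cmap E ((fdb_op D h ^^ k) g) = (fdb_op D' (fls_cmap E h) ^^ k) (fls_cmap E g)" for k
    by (induction k) simp_all
  then have "fls_cmap E f = (\<Sum>k<N. fls_const (E (c k)) * (fdb_op D' (fls_cmap E h) ^^ k) (fls_cmap E g))"
    by (simp add: f cmap_sum cmap_mult cmap_const)
  then show ?thesis
    by (simp add: fdb_spanI)
qed

lemma fdb_in_fdb_span: "derivation D \<Longrightarrow> fdb D h k \<in> fdb_span D h 1"
  by (simp add: fdb_eq_fdb_op_power fdb_op_power_in_fdb_span fdb_span_self)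

lemma KPcurrent_in_fdb_span:
  assumes "derivation D" and "h \<in> Mset"
  shows "KPcurrent D h j \<in> fdb_span D h 1"
proof -
  obtain p where "KPcurrent D h j = fdb D h j + (\<Sum>l<j - 1. fls_const (p l) * fdb D h l)"
    using is_KPcurrent_KPcurrent[OF assms] unfolding is_KPcurrent_def by blast
  moreover have "fdb D h l \<in> fdb_span D h 1" for l
    using assms(1) by (rule fdb_in_fdb_span)
  ultimately show ?thesis
    by (simp add: fdb_span_add fdb_span_sum fdb_span_const_mult)
qed

section \<open>The sets S_l as membership conditions\<close>

lemma fdb_span_one_eq_0:
  assumes "derivation D" and "h \<in> Mset" and g: "g \<in> fdb_span D h 1"
    and "\<And>k. k \<ge> 0 \<Longrightarrow> zcoeff g k = 0"
  shows "g = 0"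
proof -
  obtain c N where c: "g = (\<Sum>k<N. fls_const (c k) * fdb D h k)"
    using g unfolding fdb_eq_fdb_op_power by (elim fdb_spanE)
  have "zmonic (fdb D h k) (int k + 0)" for k
    using zmonic_fdb[OF assms(1,2)] by simp
  from triangular_lincomb_eq_0[OF this] show ?thesis
    using assms(4) unfolding c by blast
qed

definition Sset_rhs :: "('a::comm_ring_1 \<Rightarrow> 'a) \<Rightarrow> 'a fls \<Rightarrow> 'a fls \<Rightarrow> int \<Rightarrow> 'a fls" where
  "Sset_rhs D h a l = KPcurrent D h (nat (l + 1))
     + (\<Sum>m \<in> {m::nat. int m \<le> l}. fls_const (zcoeff a (- int m)) * KPcurrent D h (nat (l - int m)))"

lemma in_Sset_iff: "(h, a) \<in> Sset D l \<longleftrightarrow> h \<in> Mset \<and> a \<in> Aset \<and> zpow l * a = Sset_rhs D h a l"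
  by (simp add: Sset_def Sset_rhs_def)

lemma Sset_rhs_in_fdb_span:
  "derivation D \<Longrightarrow> h \<in> Mset \<Longrightarrow> Sset_rhs D h a l \<in> fdb_span D h 1"
  unfolding Sset_rhs_def
  by (intro fdb_span_add fdb_span_sum fdb_span_const_mult KPcurrent_in_fdb_span)

lemma zcoeff_Sset_rhs:
  assumes D: "derivation D" and h: "h \<in> Mset" and a: "a \<in> Aset"
    and l: "l \<ge> -1" and k: "k \<ge> 0"
  shows "zcoeff (Sset_rhs D h a l) k = zcoeff (zpow l * a) k"
proof -
  define S where "S = {m::nat. int m \<le> l}"
  have "finite S"
    unfolding S_def by (rule finite_subset[of _ "{..nat l}"]) auto
  have "zcoeff (fls_const (zcoeff a (- int m)) * KPcurrent D h (nat (l - int m))) k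
      = (if m = nat (l - k) \<and> k \<le> l then zcoeff a (- int m) else 0)" if "m \<in> S" for m
  proof -
    have "(k = int (nat (l - int m))) = (m = nat (l - k) \<and> k \<le> l)"
      using k that by (auto simp: S_def)
    then show ?thesis
      using zcoeff_KPcurrent[OF D h k] by simp
  qed
  then have "zcoeff (\<Sum>m\<in>S. fls_const (zcoeff a (- int m)) * KPcurrent D h (nat (l - int m))) k
      = (\<Sum>m\<in>S. if m = nat (l - k) \<and> k \<le> l then zcoeff a (- int m) else 0)"
    by simp
  also have "\<dots> = (if k \<le> l then zcoeff a (k - l) else 0)"
    using \<open>finite S\<close> k by (simp add: S_def)
  finally have "zcoeff (Sset_rhs D h a l) k
      = (if k = l + 1 then 1 else 0) + (if k \<le> l then zcoeff a (k - l) else 0)"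
    using zcoeff_KPcurrent[OF D h k, of "nat (l + 1)"] l by (simp add: Sset_rhs_def S_def)
  also have "\<dots> = zcoeff a (k - l)"
    using a by (auto simp: in_Aset_iff zmonic_def zdegree_le_def)
  finally show ?thesis
    by (simp add: zcoeff_zpow_mult)
qed

lemma Sset_iff_fdb_span:
  assumes D: "derivation D" and h: "h \<in> Mset" and a: "a \<in> Aset" and l: "l \<ge> -1"
  shows "(h, a) \<in> Sset D l \<longleftrightarrow> zpow l * a \<in> fdb_span D h 1"
proof
  assume "zpow l * a \<in> fdb_span D h 1"
  then have "zpow l * a - Sset_rhs D h a l \<in> fdb_span D h 1"
    by (simp add: fdb_span_diff Sset_rhs_in_fdb_span D h)
  then have "zpow l * a - Sset_rhs D h a l = 0"
    by (rule fdb_span_one_eq_0[OF D h]) (simp add: zcoeff_Sset_rhs D h a l)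
  then show "(h, a) \<in> Sset D l"
    by (simp add: in_Sset_iff h a)
qed (simp add: in_Sset_iff Sset_rhs_in_fdb_span D h)

section \<open>First-order deformations\<close>

lemma fdb_span_approx:
  assumes D: "derivation D" and h: "h \<in> Mset" and a: "a \<in> Aset" and t: "zdegree_le t d"
  shows "\<exists>v\<in>fdb_span D h a. zdegree_le (v - t) 0"
proof -
  let ?b = "\<lambda>k. (fdb_op D h ^^ k) a"
  have "zmonic (?b k) (int k + 1)" for k
    using zmonic_fdb_op_power[OF D h, of a 1 k] a by (simp add: in_Aset_iff add.commute)
  from triangular_reduction[OF this, of t "nat d"]
  obtain c where c: "\<forall>m\<ge>1. zcoeff (t - (\<Sum>k<nat d. fls_const (c k) * ?b k)) m
                     = (if m < int (nat d) + 1 then 0 else zcoeff t m)"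
    by blast
  have "zcoeff ((\<Sum>k<nat d. fls_const (c k) * ?b k) - t) m = 0" if "m > 0" for m
    using c[rule_format, of m] t that by (auto simp: zdegree_le_def split: if_splits)
  then show ?thesis
    using fdb_spanI unfolding zdegree_le_def by blast
qed

lemma fdb_op_gauge:
  assumes D: "derivation D" and "dx D \<epsilon> = 0" and "\<epsilon> * \<epsilon> = 0"
  shows "fdb_op D (h + \<epsilon> * dx D H) ((1 - \<epsilon> * H) * f) = (1 - \<epsilon> * H) * fdb_op D h f"
proof -
  have "fdb_op D (h + \<epsilon> * dx D H) ((1 - \<epsilon> * H) * f)
      = (1 - \<epsilon> * H) * fdb_op D h f - (\<epsilon> * \<epsilon>) * (H * dx D H * f)"
    by (simp add: fdb_op_def dx_mult[OF D] dx_diff[OF D] dx_one[OF D] assms(2) algebra_simps)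
  then show ?thesis
    by (simp add: assms(3))
qed

lemma fdb_span_gauge:
  fixes e :: "'a::comm_ring_1"
  assumes D: "derivation D" and "D e = 0" and "e * e = 0"
    and H: "H \<in> fdb_span D h 1" and w: "w \<in> fdb_span D h 1"
  shows "(1 - fls_const e * H) * w \<in> fdb_span D (h + fls_const e * dx D H) 1"
proof -
  define \<epsilon> where "\<epsilon> = fls_const e"
  define u where "u = 1 - \<epsilon> * H"
  define g where "g = 1 + \<epsilon> * H"
  have \<epsilon>: "dx D \<epsilon> = 0" "\<epsilon> * \<epsilon> = 0"
    by (simp_all add: \<epsilon>_def dx_const[OF D] assms(2,3))
  have "u * g = 1 - (\<epsilon> * \<epsilon>) * (H * H)"
    by (simp add: u_def g_def algebra_simps)
  then have pow: "(fdb_op D (h + \<epsilon> * dx D H) ^^ k) 1 = u * (fdb_op D h ^^ k) g" for k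
    by (induction k) (simp_all add: \<epsilon> u_def fdb_op_gauge[OF D \<epsilon>])
  have gauge: "u * f \<in> fdb_span D (h + \<epsilon> * dx D H) 1" if "f \<in> fdb_span D h g" for f
  proof -
    obtain c N where "f = (\<Sum>k<N. fls_const (c k) * (fdb_op D h ^^ k) g)"
      using \<open>f \<in> fdb_span D h g\<close> by (elim fdb_spanE)
    then have "u * f = (\<Sum>k<N. fls_const (c k) * (fdb_op D (h + \<epsilon> * dx D H) ^^ k) 1)"
      by (simp add: sum_distrib_left mult.left_commute[of u] pow)
    then show ?thesis
      by (simp add: fdb_spanI)
  qed
  have "\<epsilon> = fls_const e * g"
    using \<epsilon>(2) by (simp add: g_def \<epsilon>_def[symmetric] algebra_simps)
  then have "\<epsilon> \<in> fdb_span D h g"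
    by (simp add: fdb_span_const_mult fdb_span_self)
  moreover have "\<epsilon> * H \<in> fdb_span D h \<epsilon>"
    using fdb_span_mult_dx_const[OF D \<epsilon>(1) H] by simp
  ultimately have "1 \<in> fdb_span D h g"
    using fdb_span_diff[OF fdb_span_self, of "\<epsilon> * H" D h g] fdb_span_trans[OF D]
    by (simp add: g_def)
  then show ?thesis
    using gauge fdb_span_trans[OF D _ w] by (simp add: u_def \<epsilon>_def)
qed

lemma derivation_dualD: "derivation D \<Longrightarrow> derivation (dualD D)"
  unfolding derivation_def dualD_def
  by (simp add: plus_dual_def times_dual_def algebra_simps)

lemma dualD_Dual_const: "derivation D \<Longrightarrow> dualD D (Dual c 0) = Dual (D c) 0"
  by (simp add: dualD_def derivation_zero)

lemma Dual_eps_squared: "Dual 0 1 * Dual 0 1 = (0 :: 'a::comm_ring_1 dual)"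
  by (simp add: times_dual_def zero_dual_def)

lemma dualD_Dual_eps: "derivation D \<Longrightarrow> dualD D (Dual 0 1) = 0"
  by (simp add: dualD_def derivation_zero derivation_one zero_dual_def)

interpretation Dual_const: coeff_ring_hom "\<lambda>c::'a::comm_ring_1. Dual c 0"
  by standard (simp_all add: plus_dual_def times_dual_def one_dual_def)

lemma dx_dualD_cmap:
  "derivation D \<Longrightarrow> dx (dualD D) (fls_cmap (\<lambda>c. Dual c 0) f) = fls_cmap (\<lambda>c. Dual c 0) (dx D f)"
  by (intro Dual_const.cmap_dx derivation_dualD dualD_Dual_const)

lemma cmap_Dual_in_fdb_span:
  assumes "derivation D" and "f \<in> fdb_span D h 1"
  shows "fls_cmap (\<lambda>c. Dual c 0) f \<in> fdb_span (dualD D) (fls_cmap (\<lambda>c. Dual c 0) h) 1"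
  using Dual_const.cmap_fdb_span[OF assms(1) derivation_dualD[OF assms(1)] dualD_Dual_const[OF assms(1)]
      assms(2)]
  by (simp add: Dual_const.cmap_one)

text \<open>\<open>dual_fls f g\<close> is the series f + eps g over the dual numbers, as in \<^const>\<open>tangent\<close>.\<close>

definition dual_fls :: "'a::comm_ring_1 fls \<Rightarrow> 'a fls \<Rightarrow> 'a dual fls" where
  "dual_fls f g = fls_cmap (\<lambda>c. Dual c 0) f + fls_cmap (Dual 0) g"

lemma dual_fls_eq:
  "dual_fls f g = fls_cmap (\<lambda>c. Dual c 0) f + fls_const (Dual 0 1) * fls_cmap (\<lambda>c. Dual c 0) g"
  by (rule fls_eqI) (simp add: dual_fls_def fls_nth_cmap zero_dual_def times_dual_def)

lemma zcoeff_dual_fls: "zcoeff (dual_fls f g) k = Dual (zcoeff f k) (zcoeff g k)"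
  by (simp add: dual_fls_def zcoeff_def fls_nth_cmap zero_dual_def plus_dual_def)

lemma dual_fls_in_Mset: "f \<in> Mset \<Longrightarrow> zdegree_le g (-1) \<Longrightarrow> dual_fls f g \<in> Mset"
  by (simp add: in_Mset_iff zmonic_def zdegree_le_def zcoeff_dual_fls zero_dual_def one_dual_def)

lemma dual_fls_in_Aset: "f \<in> Aset \<Longrightarrow> zdegree_le g 0 \<Longrightarrow> dual_fls f g \<in> Aset"
  by (simp add: in_Aset_iff zmonic_def zdegree_le_def zcoeff_dual_fls zero_dual_def one_dual_def)

lemma Sset_first_order_deformation:
  assumes D: "derivation D" and L: "L \<ge> -1" and S: "(h, a) \<in> Sset D L"
    and H: "H \<in> fdb_span D h 1" "zdegree_le (dx D H) (-1)"
    and v: "v \<in> fdb_span D h a" "zdegree_le (v - a * H) 0"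
  shows "(dual_fls h (dx D H), dual_fls a (v - a * H)) \<in> Sset (dualD D) L"
proof -
  let ?E = "fls_cmap (\<lambda>c. Dual c 0)"
  define \<epsilon> where "\<epsilon> = fls_const (Dual 0 1 :: 'a dual)"
  have D': "derivation (dualD D)"
    using D by (rule derivation_dualD)
  have h: "h \<in> Mset" and a: "a \<in> Aset"
    using S by (simp_all add: in_Sset_iff)
  have h': "dual_fls h (dx D H) = ?E h + \<epsilon> * dx (dualD D) (?E H)"
    by (simp add: dual_fls_eq \<epsilon>_def dx_dualD_cmap[OF D])
  have za: "zpow L * a \<in> fdb_span D h 1"
    using S Sset_iff_fdb_span[OF D h a L] by simp
  moreover have "zpow L * v \<in> fdb_span D h 1"
    using fdb_span_trans[OF D za fdb_span_mult_dx_const[OF D dx_zpow[OF D] v(1)]] .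
  ultimately have "?E (zpow L * a) + \<epsilon> * ?E (zpow L * v) \<in> fdb_span (dualD D) (?E h) 1"
    unfolding \<epsilon>_def by (intro fdb_span_add fdb_span_const_mult cmap_Dual_in_fdb_span D)
  moreover have "?E H \<in> fdb_span (dualD D) (?E h) 1"
    using D H(1) by (rule cmap_Dual_in_fdb_span)
  ultimately have "(1 - \<epsilon> * ?E H) * (?E (zpow L * a) + \<epsilon> * ?E (zpow L * v))
      \<in> fdb_span (dualD D) (dual_fls h (dx D H)) 1"
    unfolding h' \<epsilon>_def
    by (intro fdb_span_gauge[OF D' dualD_Dual_eps[OF D] Dual_eps_squared])
  moreover have "(1 - \<epsilon> * ?E H) * (?E (zpow L * a) + \<epsilon> * ?E (zpow L * v))
      = zpow L * dual_fls a (v - a * H) - (\<epsilon> * \<epsilon>) * (zpow L * ?E H * ?E v)"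
    by (simp add: dual_fls_eq \<epsilon>_def[symmetric] Dual_const.cmap_mult Dual_const.cmap_diff
        Dual_const.cmap_zpow algebra_simps)
  moreover have "\<epsilon> * \<epsilon> = 0"
    by (simp add: \<epsilon>_def Dual_eps_squared)
  moreover have "dual_fls h (dx D H) \<in> Mset" "dual_fls a (v - a * H) \<in> Aset"
    using h a H(2) v(2) by (simp_all add: dual_fls_in_Mset dual_fls_in_Aset)
  ultimately show ?thesis
    using Sset_iff_fdb_span[OF D'] L by simp
qed

theorem proposition3:
  fixes D :: "'a::comm_ring_1 \<Rightarrow> 'a"
    and l :: int and n :: int and j :: nat
  assumes "derivation D"
    and "\<forall>k::nat. k > 0 \<longrightarrow> (\<exists>y::'a. of_nat k * y = 1)"
    and "l \<ge> -1" and "n \<ge> 1" and "j \<ge> 1"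
  shows "tangent D (KPfield D j) (Sprime D l (l + n)) (Sprime (dualD D) l (l + n))"
  unfolding tangent_def dual_fls_def[symmetric]
proof
  note D = assms(1)
  fix h assume "h \<in> Sprime D l (l + n)"
  then obtain a where S: "(h, a) \<in> Sset D l" "(h, a) \<in> Sset D (l + n)"
    by (auto simp: Sprime_def mu_def)
  then have h: "h \<in> Mset" and a: "a \<in> Aset"
    by (simp_all add: in_Sset_iff)
  define H where "H = KPcurrent D h j"
  have "zdegree_le (a * H) (1 + int j)"
    using a zdegree_le_KPcurrent[OF D h] by (simp add: H_def in_Aset_iff zmonic_def zdegree_le_mult)
  then obtain v where v: "v \<in> fdb_span D h a" "zdegree_le (v - a * H) 0"
    using fdb_span_approx[OF D h a] by blast
  have "(dual_fls h (dx D H), dual_fls a (v - a * H)) \<in> Sset (dualD D) L"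
    if "L \<ge> -1" and "(h, a) \<in> Sset D L" for L
    using Sset_first_order_deformation[OF D that _ _ v] KPcurrent_in_fdb_span[OF D h]
      zdegree_le_dx_KPcurrent[OF D h] by (simp add: H_def)
  then have "(dual_fls h (dx D H), dual_fls a (v - a * H)) \<in> Sset (dualD D) l \<inter> Sset (dualD D) (l + n)"
    using S assms(3,4) by simp
  then show "dual_fls h (KPfield D j h) \<in> Sprime (dualD D) l (l + n)"
    unfolding Sprime_def mu_def KPfield_def H_def by force
qed

end
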